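(* Consider the Task Scheduling Game defined in the context. Let $\mathbf{s}^*=(\mathbf{s}_1^*,\dots,\mathbf{s}_N^* )$ be any maximizer of $$\Phi(\mathbf{s}) = \sum_{k \in \mathcal{S}} \sum_{m=1}^{M_k(\mathbf{s})} \frac{V_k}{m} - \sum_{i \in \mathcal{N}} c_i^{\mathrm{ex}}(\mathbf{s}_i) - \sum_{i\in\mathcal{N}} c_i^{\mathrm{tr}}(\mathbf{s}_i)$$ over all strategy profiles $\mathbf{s}$ in which every $\mathbf{s}_i$ is feasible. Then $\mathbf{s}^*$ is a Nash equilibrium; in particular the game has at least one Nash equilibrium.
   Context: Task Scheduling Game. There is a finite set of users $\mathcal{N}=\{1,\dots,N\}$ and a finite set of tasks $\mathcal{S}=\{1,\dots,S\}$. Each task $k$ has a reward $V_k\in\mathbb{R}$, a target location $L_k$ (a point in the plane), and a valid time period $[T_k^{\dagger},T_k^{\ddagger}]$. Each user $i$ has an initial location $L_i$, a travelling speed $R_i>0$, a travelling cost per unit distance $\widetilde C_i\ge0$, a resource budget $C_i\ge 0$, and for each available task $k\in\mathcal{S}_i\subseteq\mathcal{S}$ an execution time $T_{i,k}\ge0$ and execution cost $C_{i,k}\ge 0$. A strategy of user $i$ is an ordered set $\mathbf{s}_i=\{k_i^1,\dots,k_i^{|\mathbf{s}_i|}\}$ of distinct tasks from $\mathcal{S}_i$. Let $D(a,b)=|L_a-L_b|$ denote the distance between locations, with $D(i,k)$ the distance from user $i$'s initial location to task $k$. The strategy $\mathbf{s}_i$ is feasible if (1) $\sum_{k\in\mathbf{s}_i}C_{i,k}\le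 C_i$, and (2) there exist times $T_i^1,\dots,T_i^{|\mathbf{s}_i|}$ with $T_{k_i^j}^{\dagger}\le T_i^j\le T_{k_i^j}^{\ddagger}$ for all $j$, $T_i^1\ge D(i,k_i^1)/R_i$, and $T_i^j\ge T_i^{j-1}+T_{i,k_i^{j-1}}+D(k_i^{j-1},k_i^j)/R_i$ for $j=2,\dots,|\mathbf{s}_i|$. For a profile $\mathbf{s}$, $M_k(\mathbf{s})=\sum_{i\in\mathcal{N}}\mathbf{1}_{(k\in\mathbf{s}_i)}$. Execution cost: $c_i^{\mathrm{ex}}(\mathbf{s}_i)=\sum_{k\in\mathbf{s}_i}C_{i,k}$; travelling cost: $c_i^{\mathrm{tr}}(\mathbf{s}_i)=\sum_{j=1}^{|\mathbf{s}_i|}D(k_i^{j-1},k_i^j)\widetilde C_i$, where $k_i^0$ denotes user $i$'s initial location. Payoff: $u_i(\mathbf{s}_i,\mathbf{s}_{-i})=\sum_{k\in\mathbf{s}_i}V_k/M_k(\mathbf{s})-c_i^{\mathrm{ex}}(\mathbf{s}_i)-c_i^{\mathrm{tr}}(\mathbf{s}_i)$. A profile $\mathbf{s}^*$ of feasible strategies is a Nash equilibrium if for every user $i$, $\mathbf{s}_i^*$ maximizes $u_i(\mathbf{s}_i,\mathbf{s}_{-i}^* )$ over all feasible strategies $\mathbf{s}_i$ of user $i$. *)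

theory Defs
  imports "HOL-Analysis.Analysis"
begin

text \<open>A strategy is a list (ordered set) of tasks.\<close>

record ('u, 't) tsg =
  reward   :: "'t \<Rightarrow> real"
  tloc     :: "'t \<Rightarrow> real^2"
  tstart   :: "'t \<Rightarrow> real"
  tend     :: "'t \<Rightarrow> real"
  uloc     :: "'u \<Rightarrow> real^2"
  speed    :: "'u \<Rightarrow> real"
  trcost   :: "'u \<Rightarrow> real"
  budget   :: "'u \<Rightarrow> real"
  avail    :: "'u \<Rightarrow> 't set"
  extime   :: "'u \<Rightarrow> 't \<Rightarrow> real"
  excost   :: "'u \<Rightarrow> 't \<Rightarrow> real"

definition valid_game :: "('u, 't) tsg \<Rightarrow> bool" where
  "valid_game G \<longleftrightarrow>
     (\<forall>i. speed G i > 0 \<and> trcost G i \<ge> 0 \<and> budget G i \<ge> 0) \<and>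
     (\<forall>i k. k \<in> avail G i \<longrightarrow> extime G i k \<ge> 0 \<and> excost G i k \<ge> 0)"

definition feasible :: "('u, 't) tsg \<Rightarrow> 'u \<Rightarrow> 't list \<Rightarrow> bool" where
  "feasible G i s \<longleftrightarrow>
     distinct s \<and> set s \<subseteq> avail G i \<and>
     (\<Sum>k\<in>set s. excost G i k) \<le> budget G i \<and>
     (\<exists>T :: real list. length T = length s \<and>
        (\<forall>j<length s. tstart G (s ! j) \<le> T ! j \<and> T ! j \<le> tend G (s ! j)) \<and>
        (s \<noteq> [] \<longrightarrow> T ! 0 \<ge> dist (uloc G i) (tloc G (s ! 0)) / speed G i) \<and>
        (\<forall>j. 0 < j \<and> j < length s \<longrightarrow>
           T ! j \<ge> T ! (j - 1) + extime G i (s ! (j - 1))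
                    + dist (tloc G (s ! (j - 1))) (tloc G (s ! j)) / speed G i))"

definition users_on :: "('u::finite \<Rightarrow> 't list) \<Rightarrow> 't \<Rightarrow> nat" where
  "users_on p k = card {i. k \<in> set (p i)}"

definition ex_cost :: "('u, 't) tsg \<Rightarrow> 'u \<Rightarrow> 't list \<Rightarrow> real" where
  "ex_cost G i s = (\<Sum>k\<in>set s. excost G i k)"

definition tr_cost :: "('u, 't) tsg \<Rightarrow> 'u \<Rightarrow> 't list \<Rightarrow> real" where
  "tr_cost G i s = (\<Sum>j<length s.
      dist (if j = 0 then uloc G i else tloc G (s ! (j - 1))) (tloc G (s ! j)) * trcost G i)"

definition payoff :: "('u::finite, 't) tsg \<Rightarrow> ('u \<Rightarrow> 't list) \<Rightarrow> 'u \<Rightarrow> real" where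
  "payoff G p i = (\<Sum>k\<in>set (p i). reward G k / real (users_on p k))
                   - ex_cost G i (p i) - tr_cost G i (p i)"

definition potential :: "('u::finite, 't::finite) tsg \<Rightarrow> ('u \<Rightarrow> 't list) \<Rightarrow> real" where
  "potential G p = (\<Sum>k\<in>UNIV. \<Sum>m = 1..users_on p k. reward G k / real m)
                   - (\<Sum>i\<in>UNIV. ex_cost G i (p i)) - (\<Sum>i\<in>UNIV. tr_cost G i (p i))"

definition feasible_profile :: "('u, 't) tsg \<Rightarrow> ('u \<Rightarrow> 't list) \<Rightarrow> bool" where
  "feasible_profile G p \<longleftrightarrow> (\<forall>i. feasible G i (p i))"

definition nash_eq :: "('u::finite, 't) tsg \<Rightarrow> ('u \<Rightarrow> 't list) \<Rightarrow> bool" where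
  "nash_eq G p \<longleftrightarrow> feasible_profile G p \<and>
     (\<forall>i s. feasible G i s \<longrightarrow> payoff G (p(i := s)) i \<le> payoff G p i)"

end

theory Submission
  imports Defs
begin

text \<open>\<open>potential\<close> is an exact potential of the game: when a single user \<open>i\<close> deviates,
the potential changes by exactly the change of \<open>i\<close>'s payoff. For a task \<open>k\<close> shared by \<open>c\<close>
other users, joining it adds the term \<open>V\<^sub>k / (c + 1)\<close> to the harmonic sum \<open>\<Sum>m\<le>M\<^sub>k. V\<^sub>k / m\<close>,
which is precisely the share user \<open>i\<close> receives; the cost terms of the potential are sums
of the users' own costs.\<close>

lemma sum_fun_upd_diff:
  fixes f :: "'a \<Rightarrow> 'b \<Rightarrow> 'c::ab_group_add"
  assumes "finite A" and "i \<in> A"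
  shows "(\<Sum>j\<in>A. f j ((p(i := x)) j)) - (\<Sum>j\<in>A. f j (p j)) = f i x - f i (p i)"
proof -
  have "(\<Sum>j\<in>A. f j ((p(i := x)) j)) - (\<Sum>j\<in>A. f j (p j))
      = (\<Sum>j\<in>A. f j ((p(i := x)) j) - f j (p j))"
    by (simp add: sum_subtractf)
  also have "\<dots> = (\<Sum>j\<in>A. if j = i then f i x - f i (p i) else 0)"
    by (rule sum.cong) auto
  also have "\<dots> = f i x - f i (p i)"
    using assms by simp
  finally show ?thesis .
qed

lemma users_on_eq_others_plus:
  "users_on p k = card {j. j \<noteq> i \<and> k \<in> set (p j)} + of_bool (k \<in> set (p i))"
proof -
  have "{j. k \<in> set (p j)}
      = (if k \<in> set (p i) then insert i else id) {j. j \<noteq> i \<and> k \<in> set (p j)}"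
    by auto
  then show ?thesis
    unfolding users_on_def by simp
qed

lemma harmonic_sum_users_on_fun_upd_diff:
  fixes p :: "'u::finite \<Rightarrow> 't list" and i :: 'u and s :: "'t list"
  defines "q \<equiv> p(i := s)"
  shows "(\<Sum>m = 1..users_on q k. V / real m) - (\<Sum>m = 1..users_on p k. V / real m)
       = (if k \<in> set s then V / real (users_on q k) else 0)
       - (if k \<in> set (p i) then V / real (users_on p k) else 0)"
proof -
  define c where "c = card {j. j \<noteq> i \<and> k \<in> set (p j)}"
  have "{j. j \<noteq> i \<and> k \<in> set (q j)} = {j. j \<noteq> i \<and> k \<in> set (p j)}"
    by (auto simp: q_def)
  then have "users_on q k = c + of_bool (k \<in> set s)"
    using users_on_eq_others_plus[of q k i] by (simp add: c_def q_def)
  moreover have "users_on p k = c + of_bool (k \<in> set (p i))"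
    using users_on_eq_others_plus[of p k i] by (simp add: c_def)
  ultimately show ?thesis
    by auto
qed

lemma sum_rewards_fun_upd_diff:
  fixes G :: "('u::finite, 't::finite) tsg"
    and p :: "'u \<Rightarrow> 't list" and i :: 'u and s :: "'t list"
  defines "q \<equiv> p(i := s)"
  shows "(\<Sum>k\<in>UNIV. \<Sum>m = 1..users_on q k. reward G k / real m)
       - (\<Sum>k\<in>UNIV. \<Sum>m = 1..users_on p k. reward G k / real m)
       = (\<Sum>k\<in>set s. reward G k / real (users_on q k))
       - (\<Sum>k\<in>set (p i). reward G k / real (users_on p k))"
proof -
  have "(\<Sum>k\<in>UNIV. \<Sum>m = 1..users_on q k. reward G k / real m)
      - (\<Sum>k\<in>UNIV. \<Sum>m = 1..users_on p k. reward G k / real m)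
      = (\<Sum>k\<in>UNIV. (if k \<in> set s then reward G k / real (users_on q k) else 0))
      - (\<Sum>k\<in>UNIV. (if k \<in> set (p i) then reward G k / real (users_on p k) else 0))"
    unfolding sum_subtractf[symmetric] q_def
    by (intro sum.cong refl harmonic_sum_users_on_fun_upd_diff)
  also have "\<dots> = (\<Sum>k\<in>set s. reward G k / real (users_on q k))
      - (\<Sum>k\<in>set (p i). reward G k / real (users_on p k))"
    by (simp add: sum.If_cases Int_absorb1)
  finally show ?thesis .
qed

lemma potential_fun_upd_diff:
  fixes G :: "('u::finite, 't::finite) tsg"
  shows "potential G (p(i := s)) - potential G p = payoff G (p(i := s)) i - payoff G p i"
  using sum_rewards_fun_upd_diff[of G p i s]
    sum_fun_upd_diff[of UNIV i "ex_cost G" p s] sum_fun_upd_diff[of UNIV i "tr_cost G" p s]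
  unfolding potential_def payoff_def by simp

lemma nash_eq_if_potential_maximal:
  fixes G :: "('u::finite, 't::finite) tsg"
  assumes "feasible_profile G p"
    and "\<And>q. feasible_profile G q \<Longrightarrow> potential G q \<le> potential G p"
  shows "nash_eq G p"
  unfolding nash_eq_def
proof (intro conjI allI impI)
  fix i s
  assume "feasible G i s"
  with assms(1) have "feasible_profile G (p(i := s))"
    by (simp add: feasible_profile_def)
  then have "potential G (p(i := s)) \<le> potential G p"
    by (rule assms(2))
  then show "payoff G (p(i := s)) i \<le> payoff G p i"
    using potential_fun_upd_diff[of G p i s] by linarith
qed (fact assms(1))

theorem lemma3:
  fixes G :: "('u::finite, 't::finite) tsg" and p :: "'u \<Rightarrow> 't list"
  assumes "valid_game G"
    and "feasible_profile G p"
    and "\<forall>q. feasible_profile G q \<longrightarrow> potential G q \<le> potential G p"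
  shows "nash_eq G p \<and> (\<exists>q. nash_eq G q)"
proof -
  have "nash_eq G p"
    using assms(2,3) by (blast intro: nash_eq_if_potential_maximal)
  then show ?thesis
    by blast
qed

end
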